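(* Let $A$ be a symmetric real $n\times n$ matrix, $w\in\mathbb{R}^n$ with all entries strictly positive, $W=\mathrm{diag}(w)$, and for nonzero $X\in\{0,1\}^n$ let $e(X)=-\frac{X'AX}{w'X}$ and $\nabla e(X)=w\,\frac{X'AX}{(w'X)^2}-AX\,\frac{2}{w'X}$. Fix a nonzero $X_t\in\{0,1\}^n$ and for $\delta\in\mathbb{R}$ define $$T_t(X,\delta)=\nabla e(X_t)'X+\delta\left(\frac{(\mathbf{1}-2X_t)'WX}{w'X_t}+1\right).$$ Then for every $\delta\ge-\lambda_0(W^{-1/2}AW^{-1/2})$ (where $\lambda_0$ is the smallest eigenvalue), $T_t(X,\delta)\ge e(X)$ for all nonzero $X\in\{0,1\}^n$ and $T_t(X_t,\delta)=e(X_t)$; i.e. $T_t(\cdot,\delta)$ is an auxiliary function for $e$ at $X_t$. In particular, $T_t$ is a pseudo-bound of $e$ at $X_t$.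
   Context: A family $B(X,\delta)$ is a pseudo-bound for $e$ at $X_t$ if for at least one parameter value $\delta'$ the function $B(\cdot,\delta')$ satisfies $B(X,\delta')\ge e(X)$ for all admissible $X$ and $B(X_t,\delta')=e(X_t)$. $\mathbf{1}$ is the all-ones vector. *)

theory Defs
  imports "HOL-Analysis.Analysis"
begin

definition diag_mat :: "real ^ 'n \<Rightarrow> real ^ 'n ^ 'n" where
  "diag_mat v = (\<chi> i j. if i = j then v $ i else 0)"

definition smallest_eigenvalue :: "real ^ 'n ^ 'n \<Rightarrow> real" where
  "smallest_eigenvalue M = Min {l. \<exists>v. v \<noteq> 0 \<and> M *v v = l *\<^sub>R v}"

definition binvec :: "real ^ 'n \<Rightarrow> bool" where
  "binvec X \<longleftrightarrow> (\<forall>i. X $ i = 0 \<or> X $ i = 1) \<and> X \<noteq> 0"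

definition energy :: "real ^ 'n ^ 'n \<Rightarrow> real ^ 'n \<Rightarrow> real ^ 'n \<Rightarrow> real" where
  "energy A w X = - (X \<bullet> (A *v X)) / (w \<bullet> X)"

definition grad_energy :: "real ^ 'n ^ 'n \<Rightarrow> real ^ 'n \<Rightarrow> real ^ 'n \<Rightarrow> real ^ 'n" where
  "grad_energy A w X = ((X \<bullet> (A *v X)) / (w \<bullet> X)^2) *\<^sub>R w - (2 / (w \<bullet> X)) *\<^sub>R (A *v X)"

definition T_aux :: "real ^ 'n ^ 'n \<Rightarrow> real ^ 'n \<Rightarrow> real ^ 'n \<Rightarrow> real ^ 'n \<Rightarrow> real \<Rightarrow> real" where
  "T_aux A w Xt X \<delta> = grad_energy A w Xt \<bullet> X
      + \<delta> * (((1 - 2 *\<^sub>R Xt) \<bullet> (diag_mat w *v X)) / (w \<bullet> Xt) + 1)"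

definition pseudo_bound ::
  "(real ^ 'n \<Rightarrow> real \<Rightarrow> real) \<Rightarrow> (real ^ 'n \<Rightarrow> real) \<Rightarrow> (real ^ 'n \<Rightarrow> bool) \<Rightarrow> real ^ 'n \<Rightarrow> bool" where
  "pseudo_bound B e adm Xt \<longleftrightarrow>
     (\<exists>\<delta>'. (\<forall>X. adm X \<longrightarrow> B X \<delta>' \<ge> e X) \<and> B Xt \<delta>' = e Xt)"

end

theory Submission
  imports Defs
begin

text \<open>Put \<open>d = X / (w'X) - X\<^sub>t / (w'X\<^sub>t)\<close>. The gap \<open>T\<^sub>t(X,\<delta>) - e(X)\<close> equals
\<open>(w'X) (d'Ad + \<delta> d'Wd)\<close>: the linearisation of \<open>e\<close> contributes the \<open>A\<close>-part, and the penalty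
term contributes the \<open>W\<close>-part because a 0/1 vector satisfies \<open>X'WX = w'X\<close>. Writing
\<open>d = W^(-1/2) z\<close>, the bracket becomes \<open>z'(W^(-1/2) A W^(-1/2) + \<delta>) z\<close>, which is nonnegative for
\<open>\<delta> \<ge> -\<lambda>\<^sub>0\<close> by the Rayleigh principle; at \<open>X = X\<^sub>t\<close> we have \<open>d = 0\<close>.\<close>

lemma nonneg_quadratic_imp_linear_coeff_zero:
  fixes b c :: real
  assumes "\<And>t. 0 \<le> b * t + c * t\<^sup>2"
  shows "b = 0"
proof (rule ccontr)
  assume "b \<noteq> 0"
  define k where "k = \<bar>c\<bar> + 1"
  have "k > 0" "c < k" by (auto simp: k_def)
  have "b * (- b / k) + c * (- b / k)\<^sup>2 = b\<^sup>2 / k * (c / k - 1)"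
    using \<open>k > 0\<close> by (simp add: field_simps power2_eq_square)
  also have "\<dots> < 0"
    using \<open>b \<noteq> 0\<close> \<open>k > 0\<close> \<open>c < k\<close> by (intro mult_pos_neg) (simp_all add: divide_less_eq)
  finally show False using assms[of "- b / k"] by simp
qed

lemma symmetric_matrix_inner_commute:
  fixes M :: "real ^ 'n ^ 'n"
  assumes "transpose M = M"
  shows "(M *v x) \<bullet> y = x \<bullet> (M *v y)"
  by (metis assms dot_lmul_matrix vector_transpose_matrix)

lemma rayleigh_minimizer_is_eigenvector:
  fixes M :: "real ^ 'n ^ 'n"
  assumes sym: "transpose M = M"
    and lower: "\<And>x. \<mu> * (x \<bullet> x) \<le> x \<bullet> (M *v x)"
    and attained: "z \<bullet> (M *v z) = \<mu> * (z \<bullet> z)"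
  shows "M *v z = \<mu> *\<^sub>R z"
proof -
  define y where "y = M *v z - \<mu> *\<^sub>R z"
  have expand: "(z + t *\<^sub>R y) \<bullet> (M *v (z + t *\<^sub>R y)) - \<mu> * ((z + t *\<^sub>R y) \<bullet> (z + t *\<^sub>R y))
      = 2 * (y \<bullet> y) * t + (y \<bullet> (M *v y) - \<mu> * (y \<bullet> y)) * t\<^sup>2" for t
  proof -
    have "z \<bullet> (M *v y) = y \<bullet> (M *v z)"
      using symmetric_matrix_inner_commute[OF sym, of y z] by (simp add: inner_commute)
    then show ?thesis
      using attained
      by (simp add: y_def matrix_vector_right_distrib matrix_vector_mult_scaleR inner_add_left
          inner_add_right inner_diff_left inner_diff_right inner_commute algebra_simps power2_eq_square)
  qed
  have "0 \<le> 2 * (y \<bullet> y) * t + (y \<bullet> (M *v y) - \<mu> * (y \<bullet> y)) * t\<^sup>2" for t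
    using lower[of "z + t *\<^sub>R y"] expand[of t] by linarith
  then have "2 * (y \<bullet> y) = 0"
    by (rule nonneg_quadratic_imp_linear_coeff_zero)
  then show ?thesis by (simp add: y_def)
qed

lemma finite_eigenvalues_symmetric:
  fixes M :: "real ^ 'n ^ 'n"
  assumes sym: "transpose M = M"
  shows "finite {l. \<exists>v. v \<noteq> 0 \<and> M *v v = l *\<^sub>R v}" (is "finite ?E")
proof -
  define eigvec where "eigvec l = (SOME v. v \<noteq> 0 \<and> M *v v = l *\<^sub>R v)" for l
  have eigvec: "eigvec l \<noteq> 0" "M *v eigvec l = l *\<^sub>R eigvec l" if "l \<in> ?E" for l
  proof -
    have "\<exists>v. v \<noteq> 0 \<and> M *v v = l *\<^sub>R v" using that by simp
    then have "eigvec l \<noteq> 0 \<and> M *v eigvec l = l *\<^sub>R eigvec l"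
      unfolding eigvec_def by (rule someI_ex)
    then show "eigvec l \<noteq> 0" "M *v eigvec l = l *\<^sub>R eigvec l" by simp_all
  qed
  have orthogonal: "eigvec a \<bullet> eigvec b = 0" if "a \<in> ?E" "b \<in> ?E" "a \<noteq> b" for a b
  proof -
    have "a * (eigvec a \<bullet> eigvec b) = (M *v eigvec a) \<bullet> eigvec b" using eigvec(2)[OF that(1)] by simp
    also have "\<dots> = eigvec a \<bullet> (M *v eigvec b)" by (rule symmetric_matrix_inner_commute[OF sym])
    also have "\<dots> = b * (eigvec a \<bullet> eigvec b)" using eigvec(2)[OF that(2)] by simp
    finally show ?thesis using \<open>a \<noteq> b\<close> by simp
  qed
  have inj: "inj_on eigvec ?E"
  proof (rule inj_onI)
    fix a b assume "a \<in> ?E" "b \<in> ?E" "eigvec a = eigvec b"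
    then show "a = b" using orthogonal[of a b] eigvec(1)[of a] by auto
  qed
  have "pairwise orthogonal (eigvec ` ?E)"
  proof (rule pairwise_imageI)
    fix a b assume "a \<in> ?E" "b \<in> ?E" "a \<noteq> b"
    then show "orthogonal (eigvec a) (eigvec b)"
      unfolding orthogonal_def by (rule orthogonal)
  qed
  moreover have "0 \<notin> eigvec ` ?E"
  proof
    assume "0 \<in> eigvec ` ?E"
    then obtain l where "l \<in> ?E" "0 = eigvec l" by (rule imageE)
    then show False using eigvec(1) by simp
  qed
  ultimately have "independent (eigvec ` ?E)" by (rule pairwise_orthogonal_independent)
  then have "finite (eigvec ` ?E)" by (rule finiteI_independent)
  then show ?thesis using inj by (rule finite_imageD)
qed

text \<open>The minimum \<open>\<mu>\<close> of the quadratic form on the unit sphere is an eigenvalue below all others,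
  so it is the \<open>Min\<close> in \<open>smallest_eigenvalue\<close>.\<close>

lemma smallest_eigenvalue_le_quadratic_form:
  fixes M :: "real ^ 'n ^ 'n"
  assumes sym: "transpose M = M"
  shows "smallest_eigenvalue M * (x \<bullet> x) \<le> x \<bullet> (M *v x)"
proof -
  let ?Q = "\<lambda>x. x \<bullet> (M *v x)"
  have "continuous_on (sphere 0 1) ?Q"
    by (intro continuous_intros linear_continuous_on matrix_vector_mul_linear)
  moreover have "axis undefined 1 \<in> sphere (0 :: real ^ 'n) 1" by simp
  ultimately obtain z where z: "z \<in> sphere 0 1" and min: "\<And>u. u \<in> sphere 0 1 \<Longrightarrow> ?Q z \<le> ?Q u"
    using continuous_attains_inf[OF compact_sphere] by blast
  define \<mu> where "\<mu> = ?Q z"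
  have lower: "\<mu> * (x \<bullet> x) \<le> ?Q x" for x
  proof (cases "x = 0")
    case False
    define u where "u = (1 / norm x) *\<^sub>R x"
    have "u \<in> sphere 0 1" "x = norm x *\<^sub>R u" using False by (simp_all add: u_def)
    then have "?Q x = (norm x)\<^sup>2 * ?Q u"
      by (metis inner_scaleR_left inner_scaleR_right matrix_vector_mult_scaleR mult.assoc power2_eq_square)
    also have "\<dots> = (x \<bullet> x) * ?Q u" by (simp add: power2_norm_eq_inner)
    finally have "?Q x = (x \<bullet> x) * ?Q u" .
    then show ?thesis
      using min[OF \<open>u \<in> sphere 0 1\<close>] unfolding \<mu>_def
      by (metis inner_ge_zero mult.commute mult_left_mono)
  qed simp
  have "z \<bullet> z = 1" using z by (simp add: dot_square_norm)
  then have "M *v z = \<mu> *\<^sub>R z"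
    using rayleigh_minimizer_is_eigenvector[OF sym lower] by (simp add: \<mu>_def)
  then have eigenvalue: "\<mu> \<in> {l. \<exists>v. v \<noteq> 0 \<and> M *v v = l *\<^sub>R v}"
    using z by (auto intro!: exI[of _ z])
  have "\<mu> \<le> l" if l: "l \<in> {l. \<exists>v. v \<noteq> 0 \<and> M *v v = l *\<^sub>R v}" for l
  proof -
    obtain v where "v \<noteq> 0" "M *v v = l *\<^sub>R v" using l by auto
    then show ?thesis using lower[of v] by simp
  qed
  then have "smallest_eigenvalue M = \<mu>"
    unfolding smallest_eigenvalue_def
    using finite_eigenvalues_symmetric[OF sym] eigenvalue by (intro Min_eqI) auto
  then show ?thesis using lower by simp
qed

lemma diag_mat_mult_vector: "diag_mat v *v x = (\<chi> i. v $ i * x $ i)"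
proof -
  have "(\<Sum>j\<in>UNIV. (if i = j then v $ i else 0) * x $ j)
          = (\<Sum>j\<in>UNIV. if i = j then v $ j * x $ j else 0)" for i
    by (rule sum.cong) auto
  then show ?thesis by (simp add: diag_mat_def matrix_vector_mult_def vec_eq_iff)
qed

lemma transpose_diag_mat: "transpose (diag_mat v) = diag_mat v"
  by (simp add: diag_mat_def transpose_def vec_eq_iff)

lemma one_inner_diag_mat: "1 \<bullet> (diag_mat w *v x) = w \<bullet> x"
  by (simp add: inner_vec_def diag_mat_mult_vector)

lemma idempotent_inner_diag_mat:
  assumes "\<And>i. x $ i * x $ i = x $ i"
  shows "x \<bullet> (diag_mat w *v x) = w \<bullet> x"
proof -
  have "x $ i * (w $ i * x $ i) = w $ i * x $ i" for i
    using assms[of i] by (metis mult.left_commute)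
  then show ?thesis
    unfolding inner_vec_def diag_mat_mult_vector vec_lambda_beta inner_real_def
    by (metis (no_types) mult.commute sum.cong)
qed

lemma binvec_idempotent: "binvec x \<Longrightarrow> x $ i * x $ i = x $ i"
  unfolding binvec_def by (cases "x $ i = 0") auto

lemma binvec_inner_pos:
  assumes "binvec x" and wpos: "\<forall>i. w $ i > 0"
  shows "w \<bullet> x > 0"
proof -
  obtain i where "x $ i \<noteq> 0" using assms(1) unfolding binvec_def by (metis vec_eq_iff zero_index)
  then have "x $ i = 1" using assms(1) unfolding binvec_def by auto
  have "0 \<le> w $ j * x $ j" for j
    using assms unfolding binvec_def by (metis less_imp_le mult_nonneg_nonneg order_refl zero_le_one)
  then show ?thesis
    unfolding inner_vec_def using \<open>x $ i = 1\<close> wpos by (intro sum_pos2[where i = i]) auto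
qed

lemma grad_energy_linearization_gap:
  fixes A :: "real ^ 'n ^ 'n"
  assumes symA: "transpose A = A" and "w \<bullet> X \<noteq> 0" "w \<bullet> Xt \<noteq> 0"
  defines "d \<equiv> (1 / (w \<bullet> X)) *\<^sub>R X - (1 / (w \<bullet> Xt)) *\<^sub>R Xt"
  shows "grad_energy A w Xt \<bullet> X - energy A w X = (w \<bullet> X) * (d \<bullet> (A *v d))"
proof -
  have "Xt \<bullet> (A *v X) = X \<bullet> (A *v Xt)"
    using symmetric_matrix_inner_commute[OF symA, of Xt X] by (simp add: inner_commute)
  then show ?thesis
    using assms(2,3)
    unfolding grad_energy_def energy_def d_def
    by (simp add: inner_diff_left inner_diff_right matrix_vector_mult_diff_distrib
        matrix_vector_mult_scaleR inner_commute field_simps power2_eq_square)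
qed

lemma penalty_eq_weighted_norm:
  assumes X: "\<And>i. X $ i * X $ i = X $ i" and Xt: "\<And>i. Xt $ i * Xt $ i = Xt $ i"
    and "w \<bullet> X \<noteq> 0" "w \<bullet> Xt \<noteq> 0"
  defines "d \<equiv> (1 / (w \<bullet> X)) *\<^sub>R X - (1 / (w \<bullet> Xt)) *\<^sub>R Xt"
  shows "((1 - 2 *\<^sub>R Xt) \<bullet> (diag_mat w *v X)) / (w \<bullet> Xt) + 1
           = (w \<bullet> X) * (d \<bullet> (diag_mat w *v d))"
proof -
  let ?W = "diag_mat w"
  have "X \<bullet> (?W *v Xt) = Xt \<bullet> (?W *v X)"
    using symmetric_matrix_inner_commute[OF transpose_diag_mat, of w Xt X] by (simp add: inner_commute)
  then show ?thesis
    using assms(3,4)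
    unfolding d_def
    by (simp add: inner_diff_left inner_diff_right matrix_vector_mult_diff_distrib
        matrix_vector_mult_scaleR one_inner_diag_mat idempotent_inner_diag_mat[OF X]
        idempotent_inner_diag_mat[OF Xt] field_simps power2_eq_square)
qed

lemma T_aux_minus_energy:
  fixes A :: "real ^ 'n ^ 'n"
  assumes symA: "transpose A = A" and wpos: "\<forall>i. w $ i > 0"
    and Xt: "binvec Xt" and X: "binvec X"
  defines "d \<equiv> (1 / (w \<bullet> X)) *\<^sub>R X - (1 / (w \<bullet> Xt)) *\<^sub>R Xt"
  shows "T_aux A w Xt X \<delta> - energy A w X
           = (w \<bullet> X) * (d \<bullet> (A *v d) + \<delta> * (d \<bullet> (diag_mat w *v d)))"
proof -
  have nonzero: "w \<bullet> X \<noteq> 0" "w \<bullet> Xt \<noteq> 0"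
    using binvec_inner_pos[OF X wpos] binvec_inner_pos[OF Xt wpos] by simp_all
  have "grad_energy A w Xt \<bullet> X - energy A w X = (w \<bullet> X) * (d \<bullet> (A *v d))"
    unfolding d_def by (rule grad_energy_linearization_gap[OF symA nonzero])
  moreover have "((1 - 2 *\<^sub>R Xt) \<bullet> (diag_mat w *v X)) / (w \<bullet> Xt) + 1
                   = (w \<bullet> X) * (d \<bullet> (diag_mat w *v d))"
    unfolding d_def
    by (rule penalty_eq_weighted_norm[OF binvec_idempotent[OF X] binvec_idempotent[OF Xt] nonzero])
  ultimately show ?thesis
    unfolding T_aux_def by (simp add: algebra_simps)
qed

lemma generalized_rayleigh_bound:
  fixes A :: "real ^ 'n ^ 'n"
  assumes symA: "transpose A = A" and wpos: "\<forall>i. w $ i > 0"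
    and \<delta>: "\<delta> \<ge> - smallest_eigenvalue
               (diag_mat (\<chi> i. 1 / sqrt (w $ i)) ** A ** diag_mat (\<chi> i. 1 / sqrt (w $ i)))"
  shows "0 \<le> d \<bullet> (A *v d) + \<delta> * (d \<bullet> (diag_mat w *v d))"
proof -
  define D where "D = diag_mat (\<chi> i. 1 / sqrt (w $ i))"
  define z where "z = (\<chi> i. sqrt (w $ i) * d $ i)"
  have symD: "transpose D = D" unfolding D_def by (rule transpose_diag_mat)
  have symDAD: "transpose (D ** A ** D) = D ** A ** D"
    by (simp add: matrix_transpose_mul symD symA matrix_mul_assoc)
  have "D *v z = d"
    using wpos by (simp add: D_def z_def diag_mat_mult_vector vec_eq_iff less_imp_neq[symmetric])
  have "z \<bullet> ((D ** A ** D) *v z) = z \<bullet> (D *v (A *v (D *v z)))"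
    by (simp add: matrix_vector_mul_assoc matrix_mul_assoc)
  also have "\<dots> = (D *v z) \<bullet> (A *v (D *v z))"
    by (rule symmetric_matrix_inner_commute[OF symD, symmetric])
  finally have "z \<bullet> ((D ** A ** D) *v z) = d \<bullet> (A *v d)"
    using \<open>D *v z = d\<close> by simp
  moreover have "d \<bullet> (diag_mat w *v d) = z \<bullet> z"
  proof -
    have "d $ i * (w $ i * d $ i) = (sqrt (w $ i) * d $ i) * (sqrt (w $ i) * d $ i)" for i
      using wpos[rule_format, of i] by (simp add: algebra_simps)
    then show ?thesis
      unfolding inner_vec_def diag_mat_mult_vector z_def vec_lambda_beta inner_real_def
      by (rule sum.cong[OF refl])
  qed
  moreover have "0 \<le> (smallest_eigenvalue (D ** A ** D) + \<delta>) * (z \<bullet> z)"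
    using \<delta> by (simp add: D_def)
  ultimately show ?thesis
    using smallest_eigenvalue_le_quadratic_form[OF symDAD, of z] by (simp add: algebra_simps)
qed

theorem lemma2:
  fixes A :: "real ^ 'n ^ 'n" and w Xt :: "real ^ 'n"
  assumes symA: "transpose A = A"
    and wpos: "\<forall>i. w $ i > 0"
    and Xt: "binvec Xt"
  shows "(\<forall>\<delta>. \<delta> \<ge> - smallest_eigenvalue
              (diag_mat (\<chi> i. 1 / sqrt (w $ i)) ** A ** diag_mat (\<chi> i. 1 / sqrt (w $ i)))
          \<longrightarrow> (\<forall>X. binvec X \<longrightarrow> T_aux A w Xt X \<delta> \<ge> energy A w X)
            \<and> T_aux A w Xt Xt \<delta> = energy A w Xt)
       \<and> pseudo_bound (T_aux A w Xt) (energy A w) binvec Xt"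
proof -
  let ?min_eig = "smallest_eigenvalue
              (diag_mat (\<chi> i. 1 / sqrt (w $ i)) ** A ** diag_mat (\<chi> i. 1 / sqrt (w $ i)))"
  have bound: "energy A w X \<le> T_aux A w Xt X \<delta>" if X: "binvec X" and "\<delta> \<ge> - ?min_eig" for X \<delta>
  proof -
    have "0 \<le> T_aux A w Xt X \<delta> - energy A w X"
      unfolding T_aux_minus_energy[OF symA wpos Xt X]
      using binvec_inner_pos[OF X wpos] generalized_rayleigh_bound[OF symA wpos \<open>\<delta> \<ge> - ?min_eig\<close>]
      by (rule mult_nonneg_nonneg[OF less_imp_le])
    then show ?thesis by simp
  qed
  have tight: "T_aux A w Xt Xt \<delta> = energy A w Xt" for \<delta>
    using T_aux_minus_energy[OF symA wpos Xt Xt, of \<delta>] by simp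
  show ?thesis
    unfolding pseudo_bound_def using bound tight by auto
qed

end
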